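(* Let $n,s,t\in\mathbb{N}$ with $1\le s\le t\le n$, and assume $t\ge 2s$ and $s\ge n-t$. Then the number $\mathcal{M}(n,s,t)$ of monochromatic Schur triples on $\{1,\dots,n\}$ under the coloring $R^sB^{t-s}R^{n-t}$ is \[ \mathcal{M}(n,s,t)=\frac{s(s-1)}{2}+\frac{(t-2s)(t-2s-1)}{2}+(n-t)(n-t-1). \]
   Context: A Schur triple on $[n]=\{1,\dots,n\}$ is an ordered triple $(x,y,z)\in[n]^3$ with $z=x+y$ (so $(x,y,x+y)$ and $(y,x,x+y)$ are distinct if $x\ne y$); it is monochromatic under a coloring $\chi$ of $[n]$ if $\chi(x)=\chi(y)=\chi(z)$. The coloring $R^sB^{t-s}R^{n-t}$ colors $1,\dots,s$ red, $s+1,\dots,t$ blue, and $t+1,\dots,n$ red. *)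

theory Defs
  imports Complex_Main
begin

datatype colour = Red | Blue

definition schur_triples :: "nat \<Rightarrow> (nat \<times> nat \<times> nat) set" where
  "schur_triples n = {(x, y, z). x \<in> {1..n} \<and> y \<in> {1..n} \<and> z \<in> {1..n} \<and> z = x + y}"

definition monochromatic :: "(nat \<Rightarrow> colour) \<Rightarrow> nat \<times> nat \<times> nat \<Rightarrow> bool" where
  "monochromatic \<chi> tr = (case tr of (x, y, z) \<Rightarrow> \<chi> x = \<chi> y \<and> \<chi> y = \<chi> z)"

definition RBR_colouring :: "nat \<Rightarrow> nat \<Rightarrow> nat \<Rightarrow> colour" where
  "RBR_colouring s t i = (if i \<le> s then Red else if i \<le> t then Blue else Red)"

definition mono_count :: "(nat \<Rightarrow> colour) \<Rightarrow> nat \<Rightarrow> nat" where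
  "mono_count \<chi> n = card {tr \<in> schur_triples n. monochromatic \<chi> tr}"

definition M :: "nat \<Rightarrow> nat \<Rightarrow> nat \<Rightarrow> nat" where
  "M n s t = mono_count (RBR_colouring s t) n"

end

theory Submission
  imports Defs
begin

text \<open>Under the hypotheses every monochromatic Schur triple (x, y, x + y) lies in exactly one
  of four families: all three entries in the first red block; all three in the blue block;
  y, x + y in the last red block (then x \<le> n - t \<le> s is red); or the same with x and y
  swapped. The hypothesis t \<ge> 2s rules out a red triple with x, y \<le> s < t < x + y. Each
  family is a translate of {(x, y). 1 \<le> x, 1 \<le> y, x + y \<le> m}, which has m(m-1)/2 elements.\<close>

definition shifted_sum_triples :: "nat \<Rightarrow> nat \<Rightarrow> nat \<Rightarrow> (nat \<times> nat \<times> nat) set" where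
  "shifted_sum_triples a b c = {(x, y, z). z = x + y \<and> a < x \<and> b < y \<and> x + y \<le> c}"

lemma finite_shifted_sum_triples: "finite (shifted_sum_triples a b c)"
  by (rule finite_subset[of _ "{..c} \<times> {..c} \<times> {..c}"]) (auto simp: shifted_sum_triples_def)

lemma card_positive_pairs_sum_le:
  "2 * card {(x::nat, y::nat). 1 \<le> x \<and> 1 \<le> y \<and> x + y \<le> m} = m * (m - 1)"
proof (induction m)
  case 0
  have "{(x::nat, y::nat). 1 \<le> x \<and> 1 \<le> y \<and> x + y \<le> 0} = {}" by auto
  then show ?case by (simp only:) simp
next
  case (Suc m)
  let ?P = "{(x::nat, y::nat). 1 \<le> x \<and> 1 \<le> y \<and> x + y \<le> m}"
  let ?diag = "(\<lambda>x. (x, Suc m - x)) ` {1..m}"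
  have diagonal_split: "{(x::nat, y::nat). 1 \<le> x \<and> 1 \<le> y \<and> x + y \<le> Suc m} = ?P \<union> ?diag"
    by (auto simp: image_iff)
  have "finite ?P"
    by (rule finite_subset[of _ "{..m} \<times> {..m}"]) auto
  moreover have "?P \<inter> ?diag = {}" by auto
  moreover have "card ?diag = m" by (simp add: card_image inj_on_def)
  ultimately have "card (?P \<union> ?diag) = card ?P + m" by (simp add: card_Un_disjoint)
  then show ?case using Suc.IH unfolding diagonal_split by (cases m) auto
qed

lemma card_shifted_sum_triples:
  "2 * card (shifted_sum_triples a b c) = (c - a - b) * (c - a - b - 1)"
proof -
  let ?P = "{(x::nat, y::nat). 1 \<le> x \<and> 1 \<le> y \<and> x + y \<le> c - a - b}"
  let ?shift = "\<lambda>(x, y). (x + a, y + b, x + y + a + b)"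
  have "shifted_sum_triples a b c = ?shift ` ?P"
  proof (intro set_eqI iffI)
    fix p assume "p \<in> shifted_sum_triples a b c"
    then obtain x y where "p = (x, y, x + y)" "a < x" "b < y" "x + y \<le> c"
      by (auto simp: shifted_sum_triples_def)
    then show "p \<in> ?shift ` ?P"
      by (intro image_eqI[where x = "(x - a, y - b)"]) auto
  qed (auto simp: shifted_sum_triples_def)
  moreover have "inj_on ?shift ?P" by (auto simp: inj_on_def)
  ultimately show ?thesis
    using card_positive_pairs_sum_le[of "c - a - b"] by (simp add: card_image)
qed

lemma monochromatic_RBR_iff:
  assumes "2 * s \<le> t" "n - t \<le> s" "(x, y, z) \<in> schur_triples n"
  shows "monochromatic (RBR_colouring s t) (x, y, z) \<longleftrightarrow>
           x + y \<le> s \<or> (s < x \<and> s < y \<and> x + y \<le> t) \<or> t < y \<or> t < x"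
  using assms by (auto simp: monochromatic_def RBR_colouring_def schur_triples_def)

lemma monochromatic_RBR_decomposition:
  assumes "2 * s \<le> t" "n - t \<le> s" "t \<le> n"
  shows "{tr \<in> schur_triples n. monochromatic (RBR_colouring s t) tr} =
           shifted_sum_triples 0 0 s \<union> shifted_sum_triples s s t
           \<union> shifted_sum_triples 0 t n \<union> shifted_sum_triples t 0 n"
  using assms monochromatic_RBR_iff[OF assms(1,2)]
  by (fastforce simp: shifted_sum_triples_def schur_triples_def)

theorem lemma2p1:
  fixes n s t :: nat
  assumes "1 \<le> s" "s \<le> t" "t \<le> n" "t \<ge> 2 * s" "s \<ge> n - t"
  shows "real (M n s t) = real (s * (s - 1)) / 2 + real ((t - 2 * s) * (t - 2 * s - 1)) / 2
           + real ((n - t) * (n - t - 1))"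
proof -
  let ?tri = "shifted_sum_triples"
  \<comment> \<open>The last two families are disjoint since n \<le> t + s < 2t.\<close>
  have disjoint: "?tri 0 0 s \<inter> ?tri s s t = {}"
    "(?tri 0 0 s \<union> ?tri s s t) \<inter> ?tri 0 t n = {}"
    "(?tri 0 0 s \<union> ?tri s s t \<union> ?tri 0 t n) \<inter> ?tri t 0 n = {}"
    using assms by (auto simp: shifted_sum_triples_def)
  have "M n s t = card (?tri 0 0 s) + card (?tri s s t) + card (?tri 0 t n) + card (?tri t 0 n)"
    unfolding M_def mono_count_def monochromatic_RBR_decomposition[OF assms(4,5,3)]
    using disjoint by (simp add: card_Un_disjoint finite_shifted_sum_triples)
  then have "2 * M n s t = s * (s - 1) + (t - 2 * s) * (t - 2 * s - 1) + 2 * ((n - t) * (n - t - 1))"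
    using card_shifted_sum_triples[of 0 0 s] card_shifted_sum_triples[of s s t]
      card_shifted_sum_triples[of 0 t n] card_shifted_sum_triples[of t 0 n]
    by (simp add: mult_2)
  then have "real (2 * M n s t) =
      real (s * (s - 1) + (t - 2 * s) * (t - 2 * s - 1) + 2 * ((n - t) * (n - t - 1)))"
    by (rule arg_cong)
  then show ?thesis by simp
qed

end
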